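(* Let $I=[0,1]$ and $f_{1,\infty}$ an $m$-periodic sequence of continuous self-maps of $I$. If $(I,f_{1,\infty})$ is weakly mixing, then it is ergodically sensitive and syndetically sensitive.
   Context: $m$-periodic: $f_{n+m}=f_n$ for all $n$. Write $f_1^n=f_n\circ\cdots\circ f_1$. Weakly mixing: for all non-empty open $U_1,U_2,V_1,V_2$ there is $n$ with $f_1^n(U_i)\cap V_i\ne\emptyset$, $i=1,2$. For open $U$ and $\delta>0$, $N_{f_{1,\infty}}(U,\delta)=\{n\in\mathbb{N}:\exists x,y\in U,\ |f_1^n(x)-f_1^n(y)|>\delta\}$. A set $F\subseteq\mathbb{N}$ is syndetic if there is $a$ with $\{i,\dots,i+a\}\cap F\ne\emptyset$ for all $i$; upper density $\overline{d}(S)=\limsup_{n\to\infty}\frac1n|S\cap\{0,\dots,n-1\}|$. Syndetically (resp. ergodically) sensitive: there is $\delta>0$ with $N_{f_{1,\infty}}(U,\delta)$ syndetic (resp. of positive upper density) for every non-empty open $U$. *)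

theory Defs
  imports "HOL-Analysis.Analysis" "HOL-Library.Liminf_Limsup"
begin

abbreviation unitI :: "real set" where "unitI \<equiv> {0..1}"

primrec iter_comp :: "(nat \<Rightarrow> real \<Rightarrow> real) \<Rightarrow> nat \<Rightarrow> real \<Rightarrow> real" where
  "iter_comp f 0 = id"
| "iter_comp f (Suc n) = f (Suc n) \<circ> iter_comp f n"

text \<open>A sequence f_1, f_2, ... of continuous self-maps of I (f 0 unused).\<close>
definition cont_selfmap_seq :: "(nat \<Rightarrow> real \<Rightarrow> real) \<Rightarrow> bool" where
  "cont_selfmap_seq f \<longleftrightarrow>
     (\<forall>n\<ge>1. continuous_on unitI (f n) \<and> f n ` unitI \<subseteq> unitI)"

definition periodic_seq :: "nat \<Rightarrow> (nat \<Rightarrow> real \<Rightarrow> real) \<Rightarrow> bool" where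
  "periodic_seq m f \<longleftrightarrow> m \<ge> 1 \<and> (\<forall>n\<ge>1. f (n + m) = f n)"

definition nonempty_open_I :: "real set \<Rightarrow> bool" where
  "nonempty_open_I U \<longleftrightarrow> openin (top_of_set unitI) U \<and> U \<noteq> {}"

definition weakly_mixing :: "(nat \<Rightarrow> real \<Rightarrow> real) \<Rightarrow> bool" where
  "weakly_mixing f \<longleftrightarrow>
     (\<forall>U1 U2 V1 V2. nonempty_open_I U1 \<and> nonempty_open_I U2 \<and>
        nonempty_open_I V1 \<and> nonempty_open_I V2 \<longrightarrow>
        (\<exists>n\<ge>1. iter_comp f n ` U1 \<inter> V1 \<noteq> {} \<and> iter_comp f n ` U2 \<inter> V2 \<noteq> {}))"

definition sens_set :: "(nat \<Rightarrow> real \<Rightarrow> real) \<Rightarrow> real set \<Rightarrow> real \<Rightarrow> nat set" where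
  "sens_set f U \<delta> = {n. \<exists>x\<in>U. \<exists>y\<in>U. \<bar>iter_comp f n x - iter_comp f n y\<bar> > \<delta>}"

definition syndetic :: "nat set \<Rightarrow> bool" where
  "syndetic F \<longleftrightarrow> (\<exists>a. \<forall>i. {i..i+a} \<inter> F \<noteq> {})"

definition upper_density :: "nat set \<Rightarrow> ereal" where
  "upper_density S = limsup (\<lambda>n. ereal (real (card (S \<inter> {0..<n})) / real n))"

definition syndetically_sensitive :: "(nat \<Rightarrow> real \<Rightarrow> real) \<Rightarrow> bool" where
  "syndetically_sensitive f \<longleftrightarrow>
     (\<exists>\<delta>>0. \<forall>U. nonempty_open_I U \<longrightarrow> syndetic (sens_set f U \<delta>))"

definition ergodically_sensitive :: "(nat \<Rightarrow> real \<Rightarrow> real) \<Rightarrow> bool" where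
  "ergodically_sensitive f \<longleftrightarrow>
     (\<exists>\<delta>>0. \<forall>U. nonempty_open_I U \<longrightarrow> upper_density (sens_set f U \<delta>) > 0)"

end

theory Submission
  imports Defs
begin

text \<open>Weak mixing makes every nonempty open set spread by more than 1/3 at arbitrarily late
  times. If an interval U spreads at time n, its image contains one of the six cells
  [i/6, (i+1)/6], and that cell spreads again after a delay which, by m-periodicity, depends only
  on i and n mod m. So the spreading times of U have bounded gaps: they form a syndetic set, and
  syndetic sets have positive upper density. Every open set contains such an interval.\<close>

lemma cont_selfmap_seq_iter_comp:
  assumes "cont_selfmap_seq f"
  shows "continuous_on unitI (iter_comp f n) \<and> iter_comp f n ` unitI \<subseteq> unitI"
proof (induction n)
  case 0
  then show ?case by simp
next
  case (Suc n)
  have "continuous_on unitI (f (Suc n))" "f (Suc n) ` unitI \<subseteq> unitI"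
    using assms unfolding cont_selfmap_seq_def by auto
  with Suc show ?case
    by (auto simp: image_subset_iff intro: continuous_on_compose2)
qed

lemma iter_comp_add: "iter_comp f (n + j) = iter_comp (\<lambda>k. f (n + k)) j \<circ> iter_comp f n"
  by (induction j) auto

lemma iter_comp_cong: "(\<And>k. k \<ge> 1 \<Longrightarrow> g k = h k) \<Longrightarrow> iter_comp g j = iter_comp h j"
  by (induction j) auto

lemma periodic_seq_add_mult:
  assumes "periodic_seq m f" "k \<ge> 1"
  shows "f (k + t * m) = f k"
proof (induction t)
  case (Suc t)
  have "f (k + Suc t * m) = f ((k + t * m) + m)" by (simp add: algebra_simps)
  with Suc assms show ?case unfolding periodic_seq_def by simp
qed simp

lemma periodic_seq_iter_comp_shift:
  assumes "periodic_seq m f"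
  shows "iter_comp (\<lambda>k. f (n + k)) j = iter_comp (\<lambda>k. f (n mod m + k)) j"
proof (rule iter_comp_cong)
  fix k :: nat
  assume "k \<ge> 1"
  have "n + k = (n mod m + k) + (n div m) * m" by simp
  then show "f (n + k) = f (n mod m + k)"
    using periodic_seq_add_mult[OF assms, of "n mod m + k" "n div m"] \<open>k \<ge> 1\<close> by simp
qed

lemma sens_set_mono: "U \<subseteq> V \<Longrightarrow> sens_set f U \<delta> \<subseteq> sens_set f V \<delta>"
  unfolding sens_set_def by blast

lemma sens_set_shift:
  "n + j \<in> sens_set f U \<delta> \<longleftrightarrow> j \<in> sens_set (\<lambda>k. f (n + k)) (iter_comp f n ` U) \<delta>"
  unfolding sens_set_def by (simp add: iter_comp_add)

lemma nonempty_open_I_subset: "nonempty_open_I U \<Longrightarrow> U \<subseteq> unitI"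
  unfolding nonempty_open_I_def by (metis openin_subset topspace_euclidean_subtopology)

lemma nonempty_open_I_Int:
  assumes "nonempty_open_I U" "openin (top_of_set unitI) V" "u \<in> U" "u \<in> V"
  shows "nonempty_open_I (U \<inter> V)"
  using assms unfolding nonempty_open_I_def by blast

lemma nonempty_open_I_open_Int: "open S \<Longrightarrow> x \<in> unitI \<Longrightarrow> x \<in> S \<Longrightarrow> nonempty_open_I (unitI \<inter> S)"
  unfolding nonempty_open_I_def by (auto intro: openin_open_Int)

lemma openin_iter_comp_close:
  assumes "cont_selfmap_seq f"
  shows "openin (top_of_set unitI)
           {x \<in> unitI. \<forall>k\<le>N. \<bar>iter_comp f k x - iter_comp f k u\<bar> < \<epsilon>}"
proof -
  have "{x \<in> unitI. \<forall>k\<le>N. \<bar>iter_comp f k x - iter_comp f k u\<bar> < \<epsilon>}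
        = (\<Inter>k\<in>{..N}. unitI \<inter> iter_comp f k -` ball (iter_comp f k u) \<epsilon>)"
    by (auto simp: dist_real_def abs_minus_commute)
  also have "openin (top_of_set unitI) \<dots>"
  proof (rule openin_INT2)
    show "openin (top_of_set unitI) (unitI \<inter> iter_comp f k -` ball (iter_comp f k u) \<epsilon>)" for k
      using cont_selfmap_seq_iter_comp[OF assms]
      by (intro continuous_openin_preimage_gen) auto
  qed auto
  finally show ?thesis .
qed

text \<open>Apply weak mixing to a neighbourhood of u on which the first N iterates move by less
  than 1/6, with targets near 0 and near 1: the resulting spread cannot happen before time N.\<close>

lemma weakly_mixing_sens_set_unbounded:
  assumes cs: "cont_selfmap_seq f" and wm: "weakly_mixing f" and U: "nonempty_open_I U"
  shows "\<exists>n>N. n \<in> sens_set f U (1/3)"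
proof -
  obtain u where u: "u \<in> U" using U unfolding nonempty_open_I_def by blast
  have uI: "u \<in> unitI" using u nonempty_open_I_subset[OF U] by blast
  define W where "W = U \<inter> {x \<in> unitI. \<forall>k\<le>N. \<bar>iter_comp f k x - iter_comp f k u\<bar> < 1/6}"
  have W: "nonempty_open_I W"
    unfolding W_def
    by (rule nonempty_open_I_Int[OF U openin_iter_comp_close[OF cs] u]) (use uI in auto)
  define V1 where "V1 = unitI \<inter> {..<1/3::real}"
  define V2 where "V2 = unitI \<inter> {2/3::real<..}"
  have "nonempty_open_I V1" unfolding V1_def by (rule nonempty_open_I_open_Int[of _ 0]) auto
  moreover have "nonempty_open_I V2" unfolding V2_def by (rule nonempty_open_I_open_Int[of _ 1]) auto
  ultimately obtain n where "iter_comp f n ` W \<inter> V1 \<noteq> {}" "iter_comp f n ` W \<inter> V2 \<noteq> {}"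
    using wm[unfolded weakly_mixing_def, rule_format, of W W V1 V2] W by blast
  then obtain x y where x: "x \<in> W" "iter_comp f n x < 1/3" and y: "y \<in> W" "iter_comp f n y > 2/3"
    unfolding V1_def V2_def by auto
  have gt: "\<bar>iter_comp f n x - iter_comp f n y\<bar> > 1/3" using x y by auto
  have "n > N"
  proof (rule ccontr)
    assume "\<not> n > N"
    then have "\<bar>iter_comp f n x - iter_comp f n u\<bar> < 1/6" "\<bar>iter_comp f n y - iter_comp f n u\<bar> < 1/6"
      using x(1) y(1) unfolding W_def by auto
    with gt show False by linarith
  qed
  moreover have "n \<in> sens_set f U (1/3)"
    using x(1) y(1) gt unfolding W_def sens_set_def by blast
  ultimately show ?thesis by blast
qed

lemma weakly_mixing_sens_set_shift_nonempty:
  assumes cs: "cont_selfmap_seq f" and wm: "weakly_mixing f" and U: "nonempty_open_I U"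
    and ab: "a < b" "{a..b} \<subseteq> iter_comp f n ` U"
  shows "\<exists>j\<ge>1. j \<in> sens_set (\<lambda>k. f (n + k)) {a..b} (1/3)"
proof -
  define F where "F = iter_comp f n"
  have "(a + b) / 2 \<in> F ` U" using ab unfolding F_def by auto
  then obtain z where z: "z \<in> U" "F z \<in> {a<..<b}" using ab(1) by auto
  define W where "W = U \<inter> (unitI \<inter> F -` {a<..<b})"
  have "openin (top_of_set unitI) (unitI \<inter> F -` {a<..<b})"
    using cont_selfmap_seq_iter_comp[OF cs] unfolding F_def
    by (intro continuous_openin_preimage_gen) auto
  then have W: "nonempty_open_I W"
    unfolding W_def using z U nonempty_open_I_subset[OF U]
    by (intro nonempty_open_I_Int[where u = z]) auto
  obtain n' where n': "n' > n" "n' \<in> sens_set f W (1/3)"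
    using weakly_mixing_sens_set_unbounded[OF cs wm W] by blast
  then have "n' - n \<in> sens_set (\<lambda>k. f (n + k)) (F ` W) (1/3)"
    using sens_set_shift[of n "n' - n"] unfolding F_def by simp
  moreover have "F ` W \<subseteq> {a..b}" unfolding W_def by auto
  ultimately have "n' - n \<in> sens_set (\<lambda>k. f (n + k)) {a..b} (1/3)"
    using sens_set_mono by blast
  with n'(1) show ?thesis by (intro exI[of _ "n' - n"]) auto
qed

lemma Icc_contains_sixth:
  fixes p q :: real
  assumes "0 \<le> p" "q \<le> 1" "q - p > 1/3"
  shows "\<exists>i<6. {real i / 6 .. (real i + 1) / 6} \<subseteq> {p..q}"
proof -
  define i where "i = nat \<lceil>6 * p\<rceil>"
  have "real i = of_int \<lceil>6 * p\<rceil>" unfolding i_def using assms(1) by simp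
  then have "6 * p \<le> real i" "real i \<le> 6 * p + 1"
    using le_of_int_ceiling[of "6 * p"] of_int_ceiling_le_add_one[of "6 * p"] by auto
  with assms show ?thesis by (intro exI[of _ i]) auto
qed

lemma sens_set_image_contains_sixth:
  assumes cs: "cont_selfmap_seq f" and U: "convex U" "U \<subseteq> unitI"
    and n: "n \<in> sens_set f U (1/3)"
  shows "\<exists>i<6. {real i / 6 .. (real i + 1) / 6} \<subseteq> iter_comp f n ` U"
proof -
  define F where "F = iter_comp f n"
  obtain x y where xy: "x \<in> U" "y \<in> U" "\<bar>F x - F y\<bar> > 1/3"
    using n unfolding sens_set_def F_def by auto
  have "connected (F ` U)"
    using cont_selfmap_seq_iter_comp[OF cs, of n] U unfolding F_def
    by (intro connected_continuous_image convex_connected) (auto intro: continuous_on_subset)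
  then have "{min (F x) (F y) .. max (F x) (F y)} \<subseteq> F ` U"
    using xy by (intro connected_contains_Icc) (auto simp: min_def max_def)
  moreover have "F x \<in> unitI" "F y \<in> unitI"
    using cont_selfmap_seq_iter_comp[OF cs, of n] xy U unfolding F_def by blast+
  moreover obtain i where "i < 6" "{real i / 6 .. (real i + 1) / 6} \<subseteq> {min (F x) (F y) .. max (F x) (F y)}"
    using Icc_contains_sixth[of "min (F x) (F y)" "max (F x) (F y)"] xy(3) \<open>F x \<in> unitI\<close> \<open>F y \<in> unitI\<close>
    by (auto simp: min_def max_def abs_if split: if_splits)
  ultimately show ?thesis unfolding F_def by blast
qed

lemma periodic_seq_sens_set_shift:
  assumes "periodic_seq m f"
  shows "sens_set (\<lambda>k. f (n + k)) K \<delta> = sens_set (\<lambda>k. f (n mod m + k)) K \<delta>"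
  unfolding sens_set_def by (simp only: periodic_seq_iter_comp_shift[OF assms, of n])

text \<open>T r i is a LEAST over a possibly empty set, but it is only used for pairs (r, i)
  actually reached, where a spreading time exists; the sum of all T r i bounds every gap.\<close>

lemma sens_set_bounded_gaps:
  assumes per: "periodic_seq m f" and cs: "cont_selfmap_seq f" and wm: "weakly_mixing f"
    and U: "nonempty_open_I U" "convex U"
  shows "\<exists>A. \<forall>n\<in>sens_set f U (1/3). \<exists>j\<in>{1..A}. n + j \<in> sens_set f U (1/3)"
proof -
  define cell :: "nat \<Rightarrow> real set" where "cell i = {real i / 6 .. (real i + 1) / 6}" for i
  define T where "T r i = (LEAST j. j \<ge> 1 \<and> j \<in> sens_set (\<lambda>k. f (r + k)) (cell i) (1/3))" for r i
  have "\<exists>j\<in>{1..\<Sum>r<m. \<Sum>i<6. T r i}. n + j \<in> sens_set f U (1/3)"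
    if n: "n \<in> sens_set f U (1/3)" for n
  proof -
    obtain i where i: "i < 6" "cell i \<subseteq> iter_comp f n ` U"
      using sens_set_image_contains_sixth[OF cs U(2) nonempty_open_I_subset[OF U(1)] n]
      unfolding cell_def by blast
    define r where "r = n mod m"
    have shift: "sens_set (\<lambda>k. f (n + k)) K (1/3) = sens_set (\<lambda>k. f (r + k)) K (1/3)" for K
      unfolding r_def by (rule periodic_seq_sens_set_shift[OF per])
    have "\<exists>j\<ge>1. j \<in> sens_set (\<lambda>k. f (r + k)) (cell i) (1/3)"
      using weakly_mixing_sens_set_shift_nonempty[OF cs wm U(1) _ i(2)[unfolded cell_def]]
      unfolding cell_def shift by simp
    then have T: "T r i \<ge> 1 \<and> T r i \<in> sens_set (\<lambda>k. f (r + k)) (cell i) (1/3)"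
      unfolding T_def by (rule LeastI_ex)
    then have "n + T r i \<in> sens_set f U (1/3)"
      using sens_set_mono[OF i(2)] unfolding sens_set_shift shift by blast
    moreover have "r < m"
      using per unfolding r_def periodic_seq_def by simp
    then have "T r i \<le> (\<Sum>r<m. \<Sum>i<6. T r i)"
      using i(1) member_le_sum[of r "{..<m}" "\<lambda>r. \<Sum>i<6. T r i"]
        member_le_sum[of i "{..<6}" "T r"] by simp
    ultimately show ?thesis using T by auto
  qed
  then show ?thesis by blast
qed

lemma syndetic_mono: "syndetic S \<Longrightarrow> S \<subseteq> T \<Longrightarrow> syndetic T"
  unfolding syndetic_def by blast

lemma syndetic_if_bounded_gaps:
  fixes S :: "nat set"
  assumes "n\<^sub>0 \<in> S" and gaps: "\<And>n. n \<in> S \<Longrightarrow> \<exists>j\<in>{1..A}. n + j \<in> S"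
  shows "syndetic S"
  unfolding syndetic_def
proof (intro exI allI)
  fix i
  show "{i..i + (n\<^sub>0 + A)} \<inter> S \<noteq> {}"
  proof (cases "i < n\<^sub>0")
    case True
    then have "n\<^sub>0 \<in> {i..i + (n\<^sub>0 + A)} \<inter> S" using assms(1) by simp
    then show ?thesis by blast
  next
    case False
    define M where "M = Max (S \<inter> {..i})"
    have fin: "finite (S \<inter> {..i})" by simp
    have "S \<inter> {..i} \<noteq> {}" using False assms(1) by auto
    then have M: "M \<in> S" "M \<le> i"
      using Max_in[OF fin] unfolding M_def by auto
    have M_max: "k \<le> M" if "k \<in> S" "k \<le> i" for k
      using Max_ge[OF fin] that unfolding M_def by simp
    obtain j where j: "j \<in> {1..A}" "M + j \<in> S" using gaps[OF M(1)] by blast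
    have "M + j > i"
    proof (rule ccontr)
      assume "\<not> i < M + j"
      then have "M + j \<le> M" using M_max[OF j(2)] by simp
      with j(1) show False by simp
    qed
    with j M(2) have "M + j \<in> {i..i + (n\<^sub>0 + A)} \<inter> S" by auto
    then show ?thesis by blast
  qed
qed

lemma syndetic_sens_set_convex:
  assumes "periodic_seq m f" "cont_selfmap_seq f" "weakly_mixing f"
    and "nonempty_open_I U" "convex U"
  shows "syndetic (sens_set f U (1/3))"
proof -
  obtain n\<^sub>0 where "n\<^sub>0 \<in> sens_set f U (1/3)"
    using weakly_mixing_sens_set_unbounded[OF assms(2-4)] by blast
  moreover obtain A where "\<forall>n\<in>sens_set f U (1/3). \<exists>j\<in>{1..A}. n + j \<in> sens_set f U (1/3)"
    using sens_set_bounded_gaps[OF assms] by blast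
  ultimately show ?thesis using syndetic_if_bounded_gaps by metis
qed

lemma syndetic_sens_set:
  assumes per: "periodic_seq m f" and cs: "cont_selfmap_seq f" and wm: "weakly_mixing f"
    and U: "nonempty_open_I U"
  shows "syndetic (sens_set f U (1/3))"
proof -
  obtain u where u: "u \<in> U" using U unfolding nonempty_open_I_def by blast
  then obtain e where e: "e > 0" "\<And>x. x \<in> unitI \<Longrightarrow> dist x u < e \<Longrightarrow> x \<in> U"
    using U unfolding nonempty_open_I_def openin_euclidean_subtopology_iff by meson
  have "nonempty_open_I (unitI \<inter> ball u e)"
    using u nonempty_open_I_subset[OF U] e(1) by (intro nonempty_open_I_open_Int[of _ u]) auto
  moreover have "convex (unitI \<inter> ball u e)" by (intro convex_Int convex_ball) simp
  ultimately have "syndetic (sens_set f (unitI \<inter> ball u e) (1/3))"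
    by (rule syndetic_sens_set_convex[OF per cs wm])
  moreover have "unitI \<inter> ball u e \<subseteq> U" using e(2) by (auto simp: dist_commute)
  ultimately show ?thesis
    using syndetic_mono sens_set_mono[of "unitI \<inter> ball u e" U f "1/3"] by blast
qed

lemma syndetic_card_lower_bound:
  fixes S :: "nat set"
  assumes "\<And>i. {i..i + a} \<inter> S \<noteq> {}"
  shows "k \<le> card (S \<inter> {0..<k * (a + 1)})"
proof (induction k)
  case (Suc k)
  define B where "B = S \<inter> {k * (a + 1)..<Suc k * (a + 1)}"
  have "S \<inter> {0..<Suc k * (a + 1)} = S \<inter> {0..<k * (a + 1)} \<union> B"
    unfolding B_def by auto
  also have "card \<dots> = card (S \<inter> {0..<k * (a + 1)}) + card B"
    unfolding B_def by (rule card_Un_disjoint) auto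
  finally have "card (S \<inter> {0..<Suc k * (a + 1)}) = card (S \<inter> {0..<k * (a + 1)}) + card B" .
  moreover have "B \<noteq> {}"
    using assms[of "k * (a + 1)"] unfolding B_def by auto
  then have "card B \<ge> 1"
    unfolding B_def by (simp add: Suc_leI card_gt_0_iff)
  ultimately show ?case
    using Suc by linarith
qed simp

lemma syndetic_imp_upper_density_pos:
  assumes "syndetic S"
  shows "upper_density S > 0"
proof -
  obtain a where a: "\<And>i. {i..i + a} \<inter> S \<noteq> {}" using assms unfolding syndetic_def by blast
  define b where "b = a + 1"
  have b: "b > 0" unfolding b_def by simp
  have "1 / (2 * real b) \<le> real (card (S \<inter> {0..<n})) / real n" if n: "n \<ge> b" for n
  proof -
    define k where "k = n div b"
    have kb: "k * b \<le> n" "n < b + k * b" "k \<ge> 1"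
      using n b dividend_less_div_times[OF b, of n] div_greater_zero_iff[of n b]
      unfolding k_def by auto
    have "k \<le> card (S \<inter> {0..<k * b})"
      using syndetic_card_lower_bound[OF a] unfolding b_def .
    also have "\<dots> \<le> card (S \<inter> {0..<n})"
      using kb(1) by (intro card_mono) auto
    finally have "real k \<le> card (S \<inter> {0..<n})" by simp
    have "b \<le> k * b" using kb(3) by simp
    then have "n \<le> 2 * (k * b)" using kb(2) by linarith
    then have "real n \<le> 2 * (real k * real b)" by (metis of_nat_le_iff of_nat_mult of_nat_numeral)
    also have "\<dots> \<le> 2 * (card (S \<inter> {0..<n}) * real b)"
      using \<open>real k \<le> card (S \<inter> {0..<n})\<close> by (simp add: mult_right_mono)
    finally have "real n \<le> 2 * real b * card (S \<inter> {0..<n})" by (simp add: ac_simps)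
    then show ?thesis
      using n b by (simp add: divide_simps ac_simps)
  qed
  then have "\<forall>\<^sub>F n in sequentially. ereal (1 / (2 * real b)) \<le> ereal (card (S \<inter> {0..<n}) / real n)"
    by (intro eventually_sequentiallyI[of b]) simp
  then have "ereal (1 / (2 * real b)) \<le> upper_density S"
    unfolding upper_density_def by (rule le_Limsup[rotated]) simp
  moreover have "0 < ereal (1 / (2 * real b))" unfolding b_def by simp
  ultimately show ?thesis by (rule less_le_trans[rotated])
qed

theorem corollary4p3:
  fixes f :: "nat \<Rightarrow> real \<Rightarrow> real" and m :: nat
  assumes "periodic_seq m f"
    and "cont_selfmap_seq f"
    and "weakly_mixing f"
  shows "ergodically_sensitive f \<and> syndetically_sensitive f"
proof -
  have "\<And>U. nonempty_open_I U \<Longrightarrow> syndetic (sens_set f U (1/3))"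
    using syndetic_sens_set[OF assms] .
  then show ?thesis
    unfolding ergodically_sensitive_def syndetically_sensitive_def
    using syndetic_imp_upper_density_pos by (intro conjI exI[of _ "1/3"]) auto
qed

end
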